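(* Let $X=\{x,y,z\}$ and $U=\{u,v,w\}$ be distinct three-element subsets of $\Sigma^+$ such that $X^*$ and $U^*$ are $3$-maximal, $Z=X\cup U$, and let $g,h:A^*\to\Sigma^*$ (with $A=\{\mathbf a,\mathbf b,\mathbf c\}$) be the morphisms $g(\mathbf a)=x,g(\mathbf b)=y,g(\mathbf c)=z$, $h(\mathbf a)=u,h(\mathbf b)=v,h(\mathbf c)=w$. Assume that $g$ is $Z$-marked. If $(\mathbf r,\mathbf s)$ and $(\mathbf r',\mathbf s')$ are two distinct minimal solutions of $C(g,h)$, then, with $\mathbf u=\mathbf r\wedge\mathbf r'$ and $\mathbf v=\mathbf s\wedge\mathbf s'$, there is a word $o$ with $g(\mathbf u)=h(\mathbf v)o$ which is a critical overflow on $(\mathbf u,\mathbf v)$. Moreover, $h$ is $Z$-marked if and only if $o$ is the empty word.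
   Context: $\Sigma^*$ is the free monoid over a countable alphabet $\Sigma$. A submonoid of rank (cardinality of minimal generating set) at most $k$ is $k$-maximal if it is not properly contained in any submonoid of $\Sigma^*$ of rank at most $k$. $\mathbf p\wedge\mathbf q$ denotes the longest common prefix of two words. The free hull of $Z$ is the smallest free submonoid of $\Sigma^*$ containing $Z$, with basis $\mathrm{FB}(Z)$; for $w$ in it, $w=b_1\cdots b_n$ uniquely with $b_i\in\mathrm{FB}(Z)$ and $\mathrm{first}_Z(w)=b_1$. A morphism $f:A^*\to\Sigma^*$ with images in the free hull is $Z$-marked if $\mathrm{first}_Z(f(\mathbf a_1))\neq\mathrm{first}_Z(f(\mathbf a_2))$ for distinct letters $\mathbf a_1,\mathbf a_2$. $C(g,h)=\{(\mathbf r,\mathbf s)\in A^+\times A^+: g(\mathbf r)=h(\mathbf s)\}$; a solution $(\mathbf r,\mathbf s)$ is minimal if there is no solution $(\mathbf p,\mathbf q)$ with $\mathbf p$ a proper prefix of $\mathbf r$ and $\mathbf q$ a proper prefix of $\mathbf s$. For a word $\mathbf t$, $\mathrm{first}(\mathbf t)$ is its first letter. A word $o\in\Sigma^*$ is a critical overflow on $(\mathbf u,\mathbf v)\in A^*\times A^*$ if $g(\mathbf u)=h(\mathbf v)o$ and there exist $\mathbf u_1,\mathbf u_2,\mathbf v_1,\mathbf v_2\in A^*$ with $\mathrm{first}(\mathbf u_1)\neq\mathrm{first}(\mathbf u_2)$, $\mathrm{first}(\mathbf v_1)\neq\mathrm{first}(\mathbf v_2)$, $g(\mathbf u\mathbf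 u_1)=h(\mathbf v\mathbf v_1)$ and $g(\mathbf u\mathbf u_2)=h(\mathbf v\mathbf v_2)$. *)

theory Defs
  imports Main "HOL-Library.Sublist" "HOL-Library.Countable"
begin

definition monoid_gen :: "'a list set \<Rightarrow> 'a list set" where
  "monoid_gen G = {concat ws | ws. set ws \<subseteq> G}"

definition submonoid :: "'a list set \<Rightarrow> bool" where
  "submonoid M \<longleftrightarrow> [] \<in> M \<and> (\<forall>p\<in>M. \<forall>q\<in>M. p @ q \<in> M)"

definition rank_le :: "'a list set \<Rightarrow> nat \<Rightarrow> bool" where
  "rank_le M k \<longleftrightarrow> (\<exists>G. finite G \<and> card G \<le> k \<and> monoid_gen G = M)"

definition k_maximal :: "nat \<Rightarrow> 'a list set \<Rightarrow> bool" where
  "k_maximal k M \<longleftrightarrow> submonoid M \<and> rank_le M k \<and>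
     (\<forall>N. submonoid N \<and> rank_le N k \<and> M \<subseteq> N \<longrightarrow> N = M)"

definition is_code :: "'a list set \<Rightarrow> bool" where
  "is_code B \<longleftrightarrow> [] \<notin> B \<and>
     (\<forall>ws1 ws2. set ws1 \<subseteq> B \<longrightarrow> set ws2 \<subseteq> B \<longrightarrow> concat ws1 = concat ws2 \<longrightarrow> ws1 = ws2)"

definition free_submonoid :: "'a list set \<Rightarrow> bool" where
  "free_submonoid M \<longleftrightarrow> (\<exists>B. is_code B \<and> M = monoid_gen B)"

definition free_hull :: "'a list set \<Rightarrow> 'a list set" where
  "free_hull Z = \<Inter>{M. free_submonoid M \<and> Z \<subseteq> M}"

text \<open>Basis of the free hull: its minimal generating set (irreducible elements).\<close>
definition FB :: "'a list set \<Rightarrow> 'a list set" where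
  "FB Z = {w \<in> free_hull Z. w \<noteq> [] \<and>
     \<not> (\<exists>p q. p \<in> free_hull Z \<and> q \<in> free_hull Z \<and> p \<noteq> [] \<and> q \<noteq> [] \<and> w = p @ q)}"

definition first_Z :: "'a list set \<Rightarrow> 'a list \<Rightarrow> 'a list" where
  "first_Z Z w = (THE b. b \<in> FB Z \<and> (\<exists>ws. set ws \<subseteq> FB Z \<and> w = concat (b # ws)))"

datatype letter = La | Lb | Lc

definition morph :: "('b \<Rightarrow> 'a list) \<Rightarrow> 'b list \<Rightarrow> 'a list" where
  "morph f w = concat (map f w)"

definition Z_marked :: "'a list set \<Rightarrow> ('b \<Rightarrow> 'a list) \<Rightarrow> bool" where
  "Z_marked Z f \<longleftrightarrow> (\<forall>l. f l \<in> free_hull Z) \<and>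
     (\<forall>l1 l2. l1 \<noteq> l2 \<longrightarrow> first_Z Z (f l1) \<noteq> first_Z Z (f l2))"

definition C_sol :: "('b \<Rightarrow> 'a list) \<Rightarrow> ('b \<Rightarrow> 'a list) \<Rightarrow> ('b list \<times> 'b list) set" where
  "C_sol g h = {(r, s). r \<noteq> [] \<and> s \<noteq> [] \<and> morph g r = morph h s}"

definition minimal_sol :: "('b \<Rightarrow> 'a list) \<Rightarrow> ('b \<Rightarrow> 'a list) \<Rightarrow> 'b list \<Rightarrow> 'b list \<Rightarrow> bool" where
  "minimal_sol g h r s \<longleftrightarrow> (r, s) \<in> C_sol g h \<and>
     \<not> (\<exists>p q. (p, q) \<in> C_sol g h \<and> strict_prefix p r \<and> strict_prefix q s)"

definition first :: "'b list \<Rightarrow> 'b option" where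
  "first t = (if t = [] then None else Some (hd t))"

definition critical_overflow ::
  "('b \<Rightarrow> 'a list) \<Rightarrow> ('b \<Rightarrow> 'a list) \<Rightarrow> 'b list \<Rightarrow> 'b list \<Rightarrow> 'a list \<Rightarrow> bool" where
  "critical_overflow g h u v ov \<longleftrightarrow> morph g u = morph h v @ ov \<and>
     (\<exists>u1 u2 v1 v2. first u1 \<noteq> first u2 \<and> first v1 \<noteq> first v2 \<and>
        morph g (u @ u1) = morph h (v @ v1) \<and> morph g (u @ u2) = morph h (v @ v2))"

end

theory Submission
  imports Defs
begin

text \<open>Both morphisms factor through the basis of the free hull of \<open>Z\<close>, and there \<open>g\<close>
  becomes marked: its images start with pairwise distinct basis words. For a marked \<open>g\<close>,
  the \<open>h\<close>-image of the common prefix of \<open>s, s'\<close> cannot run past the \<open>g\<close>-image of the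
  common prefix of \<open>r, r'\<close>, since the continuations of \<open>r, r'\<close> begin with distinct letters;
  this gives the overflow \<open>o\<close>, and the two branching continuations make it critical. If \<open>h\<close>
  is marked as well, the symmetric argument gives \<open>o = \<epsilon>\<close>. Conversely, if \<open>o = \<epsilon>\<close>,
  minimality forces the common prefixes to be empty, so \<open>h\<close> maps the first letters of \<open>s\<close> and
  \<open>s'\<close> to words starting with two distinct first basis words of \<open>g\<close>. Were \<open>h\<close> not marked,
  its first basis words would all be among those of \<open>g\<close>; as every basis word is the first
  basis word of some word of \<open>Z\<close>, the free hull would have rank 3, which the 3-maximality of
  \<open>X\<^sup>*\<close> and \<open>U\<^sup>*\<close> rules out.\<close>

section \<open>Stable submonoids and the free hull\<close>

text \<open>Schuetzenberger's criterion: a submonoid of a free monoid is free iff it is stable.\<close>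
definition stable :: "'a list set \<Rightarrow> bool" where
  "stable M \<longleftrightarrow> (\<forall>p q w. p \<in> M \<longrightarrow> q \<in> M \<longrightarrow> p @ w \<in> M \<longrightarrow> w @ q \<in> M \<longrightarrow> w \<in> M)"

lemma stableD: "stable M \<Longrightarrow> p \<in> M \<Longrightarrow> q \<in> M \<Longrightarrow> p @ w \<in> M \<Longrightarrow> w @ q \<in> M \<Longrightarrow> w \<in> M"
  unfolding stable_def by blast

definition irreducibles :: "'a list set \<Rightarrow> 'a list set" where
  "irreducibles M = {w \<in> M. w \<noteq> [] \<and> \<not> (\<exists>p q. p \<in> M \<and> q \<in> M \<and> p \<noteq> [] \<and> q \<noteq> [] \<and> w = p @ q)}"

lemma mem_monoid_gen_iff: "w \<in> monoid_gen G \<longleftrightarrow> (\<exists>ws. set ws \<subseteq> G \<and> w = concat ws)"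
  unfolding monoid_gen_def by auto

lemma monoid_gen_concat: "set ws \<subseteq> G \<Longrightarrow> concat ws \<in> monoid_gen G"
  unfolding mem_monoid_gen_iff by blast

lemma generator_in_monoid_gen: "g \<in> G \<Longrightarrow> g \<in> monoid_gen G"
  using monoid_gen_concat[of "[g]"] by simp

lemma submonoid_monoid_gen: "submonoid (monoid_gen G)"
  unfolding submonoid_def
proof (intro conjI ballI)
  show "[] \<in> monoid_gen G" using monoid_gen_concat[of "[]"] by simp
  fix p q assume "p \<in> monoid_gen G" "q \<in> monoid_gen G"
  then obtain ps qs where "set ps \<subseteq> G" "p = concat ps" "set qs \<subseteq> G" "q = concat qs"
    unfolding mem_monoid_gen_iff by blast
  then show "p @ q \<in> monoid_gen G" using monoid_gen_concat[of "ps @ qs"] by simp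
qed

lemma submonoid_concat: "submonoid M \<Longrightarrow> set ws \<subseteq> M \<Longrightarrow> concat ws \<in> M"
  by (induction ws) (auto simp: submonoid_def)

lemma monoid_gen_least: "submonoid M \<Longrightarrow> G \<subseteq> M \<Longrightarrow> monoid_gen G \<subseteq> M"
  using submonoid_concat[of M] unfolding monoid_gen_def by blast

lemma is_codeD: "is_code B \<Longrightarrow> set ws1 \<subseteq> B \<Longrightarrow> set ws2 \<subseteq> B \<Longrightarrow> concat ws1 = concat ws2 \<Longrightarrow> ws1 = ws2"
  unfolding is_code_def by blast

lemma submonoid_free_submonoid: "free_submonoid M \<Longrightarrow> submonoid M"
  unfolding free_submonoid_def using submonoid_monoid_gen by blast

lemma stable_free_submonoid:
  assumes "free_submonoid M"
  shows "stable M"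
  unfolding stable_def
proof (intro allI impI)
  obtain B where code: "is_code B" and M: "M = monoid_gen B"
    using assms unfolding free_submonoid_def by blast
  fix p q w assume "p \<in> M" "q \<in> M" "p @ w \<in> M" "w @ q \<in> M"
  then obtain P Q PW WQ where P: "set P \<subseteq> B" "p = concat P" and Q: "set Q \<subseteq> B" "q = concat Q"
    and PW: "set PW \<subseteq> B" "p @ w = concat PW" and WQ: "set WQ \<subseteq> B" "w @ q = concat WQ"
    unfolding M mem_monoid_gen_iff by metis
  have "P @ WQ = PW @ Q"
  proof (rule is_codeD[OF code])
    show "concat (P @ WQ) = concat (PW @ Q)" using P Q PW WQ by (metis append_assoc concat_append)
  qed (use P Q PW WQ in auto)
  then obtain us where "P = PW @ us \<and> us @ WQ = Q \<or> P @ us = PW \<and> WQ = us @ Q"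
    by (auto simp: append_eq_append_conv2)
  then show "w \<in> M"
  proof
    assume "P = PW @ us \<and> us @ WQ = Q"
    then have "p = p @ w @ concat us" using P PW by simp
    then have "w = []" by simp
    then show ?thesis using submonoid_free_submonoid[OF assms] by (simp add: submonoid_def)
  next
    assume "P @ us = PW \<and> WQ = us @ Q"
    then have "w = concat us" "set us \<subseteq> B" using P PW by auto
    then show ?thesis unfolding M mem_monoid_gen_iff by blast
  qed
qed

lemma irreducibles_subset: "irreducibles M \<subseteq> M"
  unfolding irreducibles_def by auto

lemma monoid_gen_irreducibles:
  assumes "submonoid M"
  shows "monoid_gen (irreducibles M) = M"
proof
  show "monoid_gen (irreducibles M) \<subseteq> M"
    using monoid_gen_least[OF assms irreducibles_subset] .
  have "w \<in> monoid_gen (irreducibles M)" if "w \<in> M" for w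
    using that
  proof (induction "length w" arbitrary: w rule: less_induct)
    case less
    show ?case
    proof (cases "w \<in> irreducibles M \<or> w = []")
      case True
      then show ?thesis using generator_in_monoid_gen submonoid_monoid_gen unfolding submonoid_def by blast
    next
      case False
      then obtain p q where "p \<in> M" "q \<in> M" "p \<noteq> []" "q \<noteq> []" "w = p @ q"
        using less.prems unfolding irreducibles_def by blast
      moreover have "p \<in> monoid_gen (irreducibles M)" "q \<in> monoid_gen (irreducibles M)"
        using less calculation by auto
      ultimately show ?thesis using submonoid_monoid_gen unfolding submonoid_def by blast
    qed
  qed
  then show "M \<subseteq> monoid_gen (irreducibles M)" by blast
qed

lemma irreducibles_monoid_gen_subset: "irreducibles (monoid_gen G) \<subseteq> G"
proof
  fix b assume b: "b \<in> irreducibles (monoid_gen G)"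
  obtain ws where ws: "set ws \<subseteq> G" "b = concat ws"
    using b irreducibles_subset[of "monoid_gen G"] mem_monoid_gen_iff by blast
  define ws' where "ws' = filter (\<lambda>x. x \<noteq> []) ws"
  have "concat ws' = concat ws" unfolding ws'_def by (induction ws) auto
  then have ws': "set ws' \<subseteq> G" "b = concat ws'" "[] \<notin> set ws'"
    using ws unfolding ws'_def by auto
  then obtain a rest where "ws' = a # rest"
    using b unfolding irreducibles_def by (cases ws') auto
  with ws' have "a \<in> monoid_gen G" "concat rest \<in> monoid_gen G" "a \<noteq> []" and b_eq: "b = a @ concat rest"
    by (auto intro: generator_in_monoid_gen monoid_gen_concat)
  then have "concat rest = []" using b unfolding irreducibles_def by blast
  then have "b = a" using b_eq by simp
  then show "b \<in> G" using ws'(1) \<open>ws' = a # rest\<close> by simp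
qed

text \<open>Two distinct irreducibles cannot be prefix-comparable: by stability the
  overhang would again lie in \<open>M\<close>, splitting the longer one.\<close>
lemma irreducible_prefix_eq:
  assumes "stable M" "a \<in> irreducibles M" "b \<in> irreducibles M" "a = b @ d"
    "d @ t \<in> M" "t \<in> M"
  shows "a = b"
proof (rule ccontr)
  assume "a \<noteq> b"
  then have "d \<noteq> []" using assms(4) by auto
  moreover have "d \<in> M"
    using stableD[OF assms(1), of b t d] assms irreducibles_subset by blast
  ultimately show False using assms(2,3,4) unfolding irreducibles_def by blast
qed

lemma is_code_irreducibles:
  assumes "submonoid M" "stable M"
  shows "is_code (irreducibles M)"
proof -
  have "ws1 = ws2" if "set ws1 \<subseteq> irreducibles M" "set ws2 \<subseteq> irreducibles M" "concat ws1 = concat ws2"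
    for ws1 ws2
    using that
  proof (induction ws1 arbitrary: ws2)
    case Nil
    then show ?case by (cases ws2) (auto simp: irreducibles_def)
  next
    case (Cons a t1)
    then obtain b t2 where ws2: "ws2 = b # t2"
      by (cases ws2) (auto simp: irreducibles_def)
    have ab: "a \<in> irreducibles M" "b \<in> irreducibles M" and t: "concat t1 \<in> M" "concat t2 \<in> M"
      using Cons.prems ws2 submonoid_concat[OF assms(1)] irreducibles_subset by (auto, blast+)
    obtain d where "a = b @ d \<and> d @ concat t1 = concat t2 \<or> a @ d = b \<and> concat t1 = d @ concat t2"
      using Cons.prems ws2 by (auto simp: append_eq_append_conv2)
    then have "a = b"
      using irreducible_prefix_eq[OF assms(2)] ab t by metis
    then show ?case using Cons ws2 by auto
  qed
  then show ?thesis unfolding is_code_def irreducibles_def by blast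
qed

lemma free_submonoid_if_stable: "submonoid M \<Longrightarrow> stable M \<Longrightarrow> free_submonoid M"
  unfolding free_submonoid_def using is_code_irreducibles monoid_gen_irreducibles by metis

lemma subset_free_hull: "Z \<subseteq> free_hull Z"
  unfolding free_hull_def by blast

lemma free_hull_least: "free_submonoid M \<Longrightarrow> Z \<subseteq> M \<Longrightarrow> free_hull Z \<subseteq> M"
  unfolding free_hull_def by blast

lemma submonoid_free_hull: "submonoid (free_hull Z)"
  using submonoid_free_submonoid unfolding free_hull_def submonoid_def by blast

lemma Nil_in_free_hull: "[] \<in> free_hull Z"
  using submonoid_free_hull unfolding submonoid_def by blast

lemma append_in_free_hull: "p \<in> free_hull Z \<Longrightarrow> q \<in> free_hull Z \<Longrightarrow> p @ q \<in> free_hull Z"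
  using submonoid_free_hull unfolding submonoid_def by blast

lemma stable_free_hull: "stable (free_hull Z)"
  using stable_free_submonoid unfolding free_hull_def stable_def by blast

lemma FB_eq_irreducibles: "FB Z = irreducibles (free_hull Z)"
  by (simp add: FB_def irreducibles_def)

lemma is_code_FB: "is_code (FB Z)"
  unfolding FB_eq_irreducibles using is_code_irreducibles submonoid_free_hull stable_free_hull by blast

lemma monoid_gen_FB: "monoid_gen (FB Z) = free_hull Z"
  unfolding FB_eq_irreducibles using monoid_gen_irreducibles submonoid_free_hull by blast

lemma FB_subset_free_hull: "FB Z \<subseteq> free_hull Z"
  unfolding FB_eq_irreducibles by (rule irreducibles_subset)

lemma FB_not_Nil: "b \<in> FB Z \<Longrightarrow> b \<noteq> []"
  unfolding FB_def by blast

section \<open>Factorization over the basis of the free hull\<close>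

definition FB_factors :: "'a list set \<Rightarrow> 'a list \<Rightarrow> 'a list list" where
  "FB_factors Z w = (THE ws. set ws \<subseteq> FB Z \<and> concat ws = w)"

lemma FB_factors_concat: "set ws \<subseteq> FB Z \<Longrightarrow> FB_factors Z (concat ws) = ws"
  unfolding FB_factors_def by (rule the_equality) (use is_codeD[OF is_code_FB] in auto)

lemma FB_factors_Nil [simp]: "FB_factors Z [] = []"
  using FB_factors_concat[of "[]" Z] by simp

lemma FB_factors:
  assumes "w \<in> free_hull Z"
  shows "set (FB_factors Z w) \<subseteq> FB Z" "concat (FB_factors Z w) = w"
proof -
  obtain ws where "set ws \<subseteq> FB Z" "w = concat ws"
    using assms unfolding monoid_gen_FB[symmetric] mem_monoid_gen_iff by blast
  then show "set (FB_factors Z w) \<subseteq> FB Z" "concat (FB_factors Z w) = w"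
    by (simp_all add: FB_factors_concat)
qed

lemma FB_factors_append:
  "p \<in> free_hull Z \<Longrightarrow> q \<in> free_hull Z \<Longrightarrow> FB_factors Z (p @ q) = FB_factors Z p @ FB_factors Z q"
  using FB_factors_concat[of "FB_factors Z p @ FB_factors Z q" Z] FB_factors[of p Z] FB_factors[of q Z]
  by simp

lemma FB_factors_eq_Nil_iff: "w \<in> free_hull Z \<Longrightarrow> FB_factors Z w = [] \<longleftrightarrow> w = []"
  using FB_factors[of w Z] FB_factors_concat[of "[]" Z] by auto

lemma first_Z_concat:
  assumes "set ws \<subseteq> FB Z" "ws \<noteq> []"
  shows "first_Z Z (concat ws) = hd ws"
  unfolding first_Z_def
proof (rule the_equality)
  show "hd ws \<in> FB Z \<and> (\<exists>ws'. set ws' \<subseteq> FB Z \<and> concat ws = concat (hd ws # ws'))"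
    using assms by (cases ws) auto
next
  fix b assume "b \<in> FB Z \<and> (\<exists>ws'. set ws' \<subseteq> FB Z \<and> concat ws = concat (b # ws'))"
  then obtain ws' where "set (b # ws') \<subseteq> FB Z" "concat ws = concat (b # ws')" by auto
  then show "b = hd ws" using is_codeD[OF is_code_FB] assms by (metis list.sel(1))
qed

lemma first_Z_eq_hd_FB_factors:
  "w \<in> free_hull Z \<Longrightarrow> w \<noteq> [] \<Longrightarrow> first_Z Z w = hd (FB_factors Z w)"
  using first_Z_concat[of "FB_factors Z w" Z] FB_factors[of w Z] FB_factors_eq_Nil_iff by metis

lemma first_Z_in_FB: "w \<in> free_hull Z \<Longrightarrow> w \<noteq> [] \<Longrightarrow> first_Z Z w \<in> FB Z"
  using first_Z_eq_hd_FB_factors FB_factors FB_factors_eq_Nil_iff by (metis hd_in_set subsetD)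

lemma first_Z_append:
  assumes "p \<in> free_hull Z" "q \<in> free_hull Z" "p \<noteq> []"
  shows "first_Z Z (p @ q) = first_Z Z p"
proof -
  have "p @ q \<in> free_hull Z" using assms(1,2) by (rule append_in_free_hull)
  then show ?thesis
    using assms by (simp add: first_Z_eq_hd_FB_factors FB_factors_append FB_factors_eq_Nil_iff)
qed

text \<open>Every basis word of the free hull starts the factorization of some word of \<open>Z\<close>:
  otherwise the words whose factorization does not start with \<open>b\<close> would form a
  stable submonoid containing \<open>Z\<close> but not \<open>b\<close>.\<close>
lemma FB_subset_first_Z_image:
  assumes "[] \<notin> Z"
  shows "FB Z \<subseteq> first_Z Z ` Z"
proof
  fix b assume b: "b \<in> FB Z"
  show "b \<in> first_Z Z ` Z"
  proof (rule ccontr)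
    assume not_first: "b \<notin> first_Z Z ` Z"
    define M where "M = {w \<in> free_hull Z. w = [] \<or> hd (FB_factors Z w) \<noteq> b}"
    have "submonoid M"
      unfolding submonoid_def
    proof (intro conjI ballI)
      show "[] \<in> M" unfolding M_def using Nil_in_free_hull by simp
      fix p q assume "p \<in> M" "q \<in> M"
      then show "p @ q \<in> M"
        unfolding M_def by (cases "p = []") (auto simp: append_in_free_hull FB_factors_append FB_factors_eq_Nil_iff)
    qed
    moreover have "stable M"
      unfolding stable_def
    proof (intro allI impI)
      fix p q w assume "p \<in> M" "q \<in> M" "p @ w \<in> M" "w @ q \<in> M"
      then have "w \<in> free_hull Z" using stableD[OF stable_free_hull, of p Z q w] unfolding M_def by blast
      with \<open>q \<in> M\<close> \<open>w @ q \<in> M\<close> show "w \<in> M"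
        unfolding M_def by (cases "w = []") (auto simp: FB_factors_append FB_factors_eq_Nil_iff)
    qed
    moreover have "Z \<subseteq> M"
    proof
      fix z assume "z \<in> Z"
      then have "z \<in> free_hull Z" "z \<noteq> []" "first_Z Z z \<noteq> b"
        using assms subset_free_hull not_first by blast+
      then show "z \<in> M" unfolding M_def by (simp add: first_Z_eq_hd_FB_factors)
    qed
    ultimately have "free_hull Z \<subseteq> M" by (intro free_hull_least free_submonoid_if_stable)
    then have "b \<in> M" using b FB_subset_free_hull by blast
    moreover have "FB_factors Z b = [b]" using FB_factors_concat[of "[b]" Z] b by simp
    ultimately show False using FB_not_Nil[OF b] unfolding M_def by simp
  qed
qed

text \<open>If the free hull of \<open>X \<union> U\<close> had rank \<open>k\<close>, maximality would force it to be both
  \<open>X\<^sup>*\<close> and \<open>U\<^sup>*\<close>, whose bases are \<open>X\<close> and \<open>U\<close>.\<close>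
lemma card_FB_neq_if_k_maximal:
  assumes "0 < k" "card X = k" "card U = k" "X \<noteq> U"
    and "k_maximal k (monoid_gen X)" "k_maximal k (monoid_gen U)"
  shows "card (FB (X \<union> U)) \<noteq> k"
proof
  assume card_FB: "card (FB (X \<union> U)) = k"
  then have "finite (FB (X \<union> U))" using assms(1) card.infinite by force
  then have rank: "rank_le (free_hull (X \<union> U)) k"
    unfolding rank_le_def using card_FB monoid_gen_FB by blast
  have FB_eq: "FB (X \<union> U) = Y" if "Y \<subseteq> X \<union> U" "card Y = k" "k_maximal k (monoid_gen Y)" for Y
  proof -
    have "monoid_gen Y \<subseteq> free_hull (X \<union> U)"
      by (rule monoid_gen_least[OF submonoid_free_hull]) (use that(1) subset_free_hull in blast)
    moreover have "\<forall>N. submonoid N \<and> rank_le N k \<and> monoid_gen Y \<subseteq> N \<longrightarrow> N = monoid_gen Y"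
      using that(3) unfolding k_maximal_def by blast
    ultimately have "free_hull (X \<union> U) = monoid_gen Y"
      using rank submonoid_free_hull by blast
    then have "FB (X \<union> U) \<subseteq> Y"
      using irreducibles_monoid_gen_subset[of Y] by (simp add: FB_eq_irreducibles)
    moreover have "finite Y" using that(2) assms(1) card.infinite by force
    ultimately show ?thesis using that(2) card_FB by (simp add: card_subset_eq)
  qed
  have "FB (X \<union> U) = X" using FB_eq[of X] assms(2,5) by blast
  moreover have "FB (X \<union> U) = U" using FB_eq[of U] assms(3,6) by blast
  ultimately show False using assms(4) by simp
qed

section \<open>Marked morphisms\<close>

lemma morph_Nil [simp]: "morph f [] = []"
  by (simp add: morph_def)

lemma morph_Cons [simp]: "morph f (a # t) = f a @ morph f t"
  by (simp add: morph_def)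

lemma morph_append [simp]: "morph f (t @ t') = morph f t @ morph f t'"
  by (simp add: morph_def)

lemma morph_eq_Nil_iff: "\<forall>l. f l \<noteq> [] \<Longrightarrow> morph f t = [] \<longleftrightarrow> t = []"
  by (cases t) auto

lemma hd_morph: "\<forall>l. f l \<noteq> [] \<Longrightarrow> t \<noteq> [] \<Longrightarrow> hd (morph f t) = hd (f (hd t))"
  by (cases t) auto

definition marked :: "('c \<Rightarrow> 'b list) \<Rightarrow> bool" where
  "marked f \<longleftrightarrow> (\<forall>l. f l \<noteq> []) \<and> inj (\<lambda>l. hd (f l))"

lemma inj_morph_if_marked:
  assumes "marked f"
  shows "inj (morph f)"
proof -
  have ne: "\<forall>l. f l \<noteq> []" and hd_inj: "inj (\<lambda>l. hd (f l))"
    using assms unfolding marked_def by blast+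
  have "t = t'" if "morph f t = morph f t'" for t t'
    using that
  proof (induction t arbitrary: t')
    case Nil
    then show ?case using morph_eq_Nil_iff[OF ne, of t'] by simp
  next
    case (Cons a t)
    then obtain b t'' where t': "t' = b # t''"
      using ne by (cases t') auto
    have "hd (f a) = hd (f b)"
      using hd_morph[OF ne, of "a # t"] hd_morph[OF ne, of t'] Cons.prems t' by simp
    then have "a = b" using hd_inj by (simp add: inj_def)
    then show ?case using Cons t' by simp
  qed
  then show ?thesis by (rule injI)
qed

lemma longest_common_prefix_split:
  obtains t1 t2 where "t = longest_common_prefix t t' @ t1" "t' = longest_common_prefix t t' @ t2"
    "first t1 = first t2 \<Longrightarrow> t1 = [] \<and> t2 = []"
proof -
  define u where "u = longest_common_prefix t t'"
  have "drop (length u) t \<noteq> [] \<Longrightarrow> drop (length u) t' \<noteq> [] \<Longrightarrow>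
      hd (drop (length u) t) \<noteq> hd (drop (length u) t')"
    unfolding u_def by (induction t t' rule: longest_common_prefix.induct) auto
  then have remainders: "first (drop (length u) t) = first (drop (length u) t') \<Longrightarrow>
      drop (length u) t = [] \<and> drop (length u) t' = []"
    by (auto simp: first_def split: if_splits)
  obtain t1 t2 where "t = u @ t1" "t' = u @ t2"
    using longest_common_prefix_prefix1[of t t'] longest_common_prefix_prefix2[of t t']
    unfolding u_def prefix_def by blast
  then show thesis using that[folded u_def] remainders by simp
qed

text \<open>Any overhang of \<open>\<psi>(lcp p p')\<close> beyond \<open>\<phi>(lcp t t')\<close> would be a common nonempty prefix
  of the \<open>\<phi>\<close>-images of the two remainders, which start with different letters.\<close>
lemma marked_prefix_longest_common_prefix:
  assumes marked: "marked \<phi>" and eq: "morph \<phi> t = morph \<psi> p" and eq': "morph \<phi> t' = morph \<psi> p'"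
  shows "prefix (morph \<psi> (longest_common_prefix p p')) (morph \<phi> (longest_common_prefix t t'))"
proof (rule ccontr)
  define u where "u = longest_common_prefix t t'"
  define v where "v = longest_common_prefix p p'"
  obtain t1 t2 where t: "t = u @ t1" "t' = u @ t2" and split: "first t1 = first t2 \<Longrightarrow> t1 = [] \<and> t2 = []"
    using longest_common_prefix_split[of t t'] unfolding u_def by blast
  obtain p1 p2 where p: "p = v @ p1" "p' = v @ p2"
    using longest_common_prefix_split[of p p'] unfolding v_def by blast
  assume "\<not> prefix (morph \<psi> v) (morph \<phi> u)"
  moreover have "prefix (morph \<psi> v) (morph \<phi> u @ morph \<phi> t1)" "prefix (morph \<psi> v) (morph \<phi> u @ morph \<phi> t2)"
    using eq eq' t p by (simp_all add: prefixI)
  ultimately obtain w where w: "w \<noteq> []" "prefix w (morph \<phi> t1)" "prefix w (morph \<phi> t2)"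
    by (auto simp: prefix_append)
  have ne: "\<forall>l. \<phi> l \<noteq> []" using marked unfolding marked_def by blast
  have "t1 \<noteq> []" "t2 \<noteq> []" using w by auto
  moreover have "hd (morph \<phi> t1) = hd w" "hd (morph \<phi> t2) = hd w"
    using w by (auto simp: prefix_def)
  ultimately have "hd (\<phi> (hd t1)) = hd (\<phi> (hd t2))"
    using hd_morph[OF ne, of t1] hd_morph[OF ne, of t2] by simp
  then have "hd t1 = hd t2" using marked unfolding marked_def inj_def by blast
  with \<open>t1 \<noteq> []\<close> \<open>t2 \<noteq> []\<close> have "first t1 = first t2" by (simp add: first_def)
  with \<open>t1 \<noteq> []\<close> show False using split by blast
qed

lemma first_append: "t \<noteq> [] \<Longrightarrow> first (t @ t') = first t"
  by (simp add: first_def)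

text \<open>If \<open>r = r'\<close>, the two distinct branches are found on the \<open>h\<close>-side only; on the
  \<open>g\<close>-side the empty continuation and a second copy of the solution branch apart.\<close>
lemma critical_extensions_longest_common_prefix:
  assumes inj: "inj (morph g)" and h_ne: "\<forall>l. h l \<noteq> []"
    and eq: "morph g r = morph h s" and eq': "morph g r' = morph h s'"
    and distinct: "(r, s) \<noteq> (r', s')" and "r \<noteq> []"
  shows "\<exists>u1 u2 v1 v2. first u1 \<noteq> first u2 \<and> first v1 \<noteq> first v2 \<and>
    morph g (longest_common_prefix r r' @ u1) = morph h (longest_common_prefix s s' @ v1) \<and>
    morph g (longest_common_prefix r r' @ u2) = morph h (longest_common_prefix s s' @ v2)"
proof -
  define u where "u = longest_common_prefix r r'"
  define v where "v = longest_common_prefix s s'"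
  obtain r1 r2 where r: "r = u @ r1" "r' = u @ r2" and split_r: "first r1 = first r2 \<Longrightarrow> r1 = [] \<and> r2 = []"
    using longest_common_prefix_split[of r r'] unfolding u_def by blast
  obtain s1 s2 where s: "s = v @ s1" "s' = v @ s2" and split_s: "first s1 = first s2 \<Longrightarrow> s1 = [] \<and> s2 = []"
    using longest_common_prefix_split[of s s'] unfolding v_def by blast
  have "s \<noteq> s'" if "r \<noteq> r'"
    using that eq eq' injD[OF inj, of r r'] by auto
  then have s_differ: "first s1 \<noteq> first s2" if "r \<noteq> r'"
    using that split_s s by auto
  show ?thesis
  proof (cases "r = r'")
    case True
    then have "r1 = []" using split_r r by auto
    have "first s1 \<noteq> first s2"
      using True distinct split_s s by auto
    moreover have "s2 \<noteq> []"
    proof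
      assume "s2 = []"
      then have "morph h s1 = []" using eq eq' True s by simp
      then have "s1 = []" using morph_eq_Nil_iff[OF h_ne] by blast
      with \<open>s2 = []\<close> \<open>first s1 \<noteq> first s2\<close> show False by simp
    qed
    moreover have "morph g (u @ []) = morph h (v @ s1)" "morph g (u @ r) = morph h (v @ (s2 @ s'))"
      using eq eq' True r \<open>r1 = []\<close> s by simp_all
    moreover have "first [] \<noteq> first r" using \<open>r \<noteq> []\<close> by (simp add: first_def)
    ultimately show ?thesis unfolding u_def v_def by (metis first_append)
  next
    case False
    then have "first r1 \<noteq> first r2" using split_r r by auto
    moreover have "morph g (u @ r1) = morph h (v @ s1)" "morph g (u @ r2) = morph h (v @ s2)"
      using eq eq' r s by simp_all
    ultimately show ?thesis using s_differ[OF False] unfolding u_def v_def by blast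
  qed
qed

section \<open>Morphisms into the free hull\<close>

lemma morph_in_free_hull: "\<forall>l. g l \<in> free_hull Z \<Longrightarrow> morph g t \<in> free_hull Z"
  by (induction t) (auto intro: Nil_in_free_hull append_in_free_hull)

lemma morph_FB_factors:
  assumes "\<forall>l. g l \<in> free_hull Z"
  shows "morph (FB_factors Z \<circ> g) t = FB_factors Z (morph g t)"
  using morph_in_free_hull[OF assms] by (induction t) (simp_all add: assms FB_factors_append)

lemma marked_FB_factors_iff:
  assumes "\<forall>l. g l \<in> free_hull Z" "\<forall>l. g l \<noteq> []"
  shows "marked (FB_factors Z \<circ> g) \<longleftrightarrow> Z_marked Z g"
  using assms unfolding marked_def Z_marked_def inj_def
  by (simp add: first_Z_eq_hd_FB_factors FB_factors_eq_Nil_iff) blast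

lemma inj_morph_if_Z_marked:
  assumes "Z_marked Z g" "\<forall>l. g l \<noteq> []"
  shows "inj (morph g)"
proof (rule injI)
  fix t t' assume "morph g t = morph g t'"
  moreover have hull: "\<forall>l. g l \<in> free_hull Z" using assms(1) unfolding Z_marked_def by blast
  ultimately have "morph (FB_factors Z \<circ> g) t = morph (FB_factors Z \<circ> g) t'"
    by (simp add: morph_FB_factors)
  then show "t = t'"
    using inj_morph_if_marked assms marked_FB_factors_iff[OF hull] by (metis injD)
qed

text \<open>Both morphisms factor through the code \<open>FB Z\<close>, where the \<open>g\<close>-side is marked.\<close>
lemma Z_marked_prefix_longest_common_prefix:
  assumes g: "Z_marked Z g" "\<forall>l. g l \<noteq> []" and h: "\<forall>l. h l \<in> free_hull Z"
    and eq: "morph g t = morph h p" and eq': "morph g t' = morph h p'"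
  shows "prefix (morph h (longest_common_prefix p p')) (morph g (longest_common_prefix t t'))"
proof -
  have g_hull: "\<forall>l. g l \<in> free_hull Z" using g unfolding Z_marked_def by blast
  let ?G = "FB_factors Z \<circ> g" and ?H = "FB_factors Z \<circ> h"
  have "morph ?G t = morph ?H p" "morph ?G t' = morph ?H p'"
    using eq eq' by (simp_all add: morph_FB_factors g_hull h)
  moreover have "marked ?G" using marked_FB_factors_iff g_hull g by blast
  ultimately have "prefix (morph ?H (longest_common_prefix p p')) (morph ?G (longest_common_prefix t t'))"
    using marked_prefix_longest_common_prefix by blast
  then have "prefix (concat (morph ?H (longest_common_prefix p p')))
                    (concat (morph ?G (longest_common_prefix t t')))"
    by (auto simp: prefix_def)
  then show ?thesis
    by (simp add: morph_FB_factors g_hull h FB_factors morph_in_free_hull)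
qed

lemma first_Z_morph:
  assumes "\<forall>l. g l \<in> free_hull Z" "\<forall>l. g l \<noteq> []" "t \<noteq> []"
  shows "first_Z Z (morph g t) = first_Z Z (g (hd t))"
proof -
  obtain a t' where "t = a # t'" using assms(3) by (cases t) auto
  then show ?thesis
    using first_Z_append[of "g a" Z "morph g t'"] morph_in_free_hull[OF assms(1)] assms(1,2) by simp
qed

section \<open>Minimal solutions and critical overflows\<close>

lemma in_free_hull_if_range_Un:
  assumes "Z = range g \<union> range h"
  shows "\<forall>l. g l \<in> free_hull Z" "\<forall>l. h l \<in> free_hull Z"
  using subset_free_hull[of Z] unfolding assms by auto

lemma not_Nil_if_range_Un:
  assumes "Z = range g \<union> range h" "[] \<notin> Z"
  shows "\<forall>l. g l \<noteq> []" "\<forall>l. h l \<noteq> []"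
  using assms(2) unfolding assms(1) by (metis UnCI rangeI)+

lemma minimal_solD: "minimal_sol g h r s \<Longrightarrow> r \<noteq> [] \<and> s \<noteq> [] \<and> morph g r = morph h s"
  unfolding minimal_sol_def C_sol_def by simp

lemma minimal_sol_prefix_eq:
  assumes g_ne: "\<forall>l. g l \<noteq> []" and h_ne: "\<forall>l. h l \<noteq> []"
    and min: "minimal_sol g h r s" and "prefix u r" "prefix v s"
    and eq: "morph g u = morph h v" and "u \<noteq> []"
  shows "u = r \<and> v = s"
proof -
  have "morph g u \<noteq> []" using \<open>u \<noteq> []\<close> morph_eq_Nil_iff[OF g_ne] by blast
  then have "v \<noteq> []" using eq by force
  then have "(u, v) \<in> C_sol g h" using eq \<open>u \<noteq> []\<close> unfolding C_sol_def by simp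
  then have "u = r \<or> v = s"
    using min \<open>prefix u r\<close> \<open>prefix v s\<close> unfolding minimal_sol_def strict_prefix_def by blast
  moreover obtain r1 s1 where "r = u @ r1" "s = v @ s1"
    using \<open>prefix u r\<close> \<open>prefix v s\<close> by (auto simp: prefix_def)
  moreover have "morph g r = morph h s" using minimal_solD[OF min] by simp
  moreover have "morph g r1 = morph h s1"
    using eq \<open>morph g r = morph h s\<close> \<open>r = u @ r1\<close> \<open>s = v @ s1\<close> by simp
  ultimately show ?thesis
    using morph_eq_Nil_iff[OF g_ne, of r1] morph_eq_Nil_iff[OF h_ne, of s1] by auto
qed

lemma longest_common_prefix_Nil_if_solution:
  assumes "\<forall>l. g l \<noteq> []" "\<forall>l. h l \<noteq> []"
    and "minimal_sol g h r s" "minimal_sol g h r' s'" "(r, s) \<noteq> (r', s')"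
    and "morph g (longest_common_prefix r r') = morph h (longest_common_prefix s s')"
  shows "longest_common_prefix r r' = []"
proof (rule ccontr)
  assume ne: "longest_common_prefix r r' \<noteq> []"
  have "longest_common_prefix r r' = r \<and> longest_common_prefix s s' = s"
    by (rule minimal_sol_prefix_eq[OF assms(1-3) longest_common_prefix_prefix1
          longest_common_prefix_prefix1 assms(6) ne])
  moreover have "longest_common_prefix r r' = r' \<and> longest_common_prefix s s' = s'"
    by (rule minimal_sol_prefix_eq[OF assms(1,2,4) longest_common_prefix_prefix2
          longest_common_prefix_prefix2 assms(6) ne])
  ultimately show False using assms(5) by simp
qed

lemma hd_neq_if_longest_common_prefix_Nil:
  "longest_common_prefix t t' = [] \<Longrightarrow> t \<noteq> [] \<Longrightarrow> t' \<noteq> [] \<Longrightarrow> hd t \<noteq> hd t'"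
  by (cases t; cases t') (auto split: if_splits)

lemma UNIV_letter: "(UNIV :: letter set) = {La, Lb, Lc}"
  using letter.exhaust by auto

lemma finite_UNIV_letter: "finite (UNIV :: letter set)"
  by (simp add: UNIV_letter)

lemma card_UNIV_letter: "card (UNIV :: letter set) = 3"
  by (simp add: UNIV_letter)

lemma range_subset_if_not_inj:
  fixes f f' :: "letter \<Rightarrow> 'b"
  assumes "\<not> inj f" "f a \<noteq> f b" "f a \<in> range f'" "f b \<in> range f'"
  shows "range f \<subseteq> range f'"
proof -
  have "card (range f) \<le> 3" using card_image_le[OF finite_UNIV_letter, of f] card_UNIV_letter by simp
  moreover have "card (range f) \<noteq> 3"
    using assms(1) inj_on_iff_eq_card[OF finite_UNIV_letter, of f] card_UNIV_letter by simp
  moreover have "{f a, f b} \<subseteq> range f" "card {f a, f b} = 2" using assms(2) by auto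
  moreover have "finite (range f)" using finite_UNIV_letter by simp
  ultimately have "{f a, f b} = range f"
    by (intro card_seteq) auto
  then show ?thesis using assms(3,4) by (simp add: eq_commute)
qed

lemma Z_marked_if_no_overflow:
  fixes g h :: "letter \<Rightarrow> 'a list"
  assumes Z: "Z = range g \<union> range h" and nonempty: "[] \<notin> Z"
    and g: "Z_marked Z g" and card_FB: "card (FB Z) \<noteq> 3"
    and min: "minimal_sol g h r s" "minimal_sol g h r' s'" and distinct: "(r, s) \<noteq> (r', s')"
    and eq: "morph g (longest_common_prefix r r') = morph h (longest_common_prefix s s')"
  shows "Z_marked Z h"
proof (rule ccontr)
  assume not_marked: "\<not> Z_marked Z h"
  note hull = in_free_hull_if_range_Un[OF Z] and ne = not_Nil_if_range_Un[OF Z nonempty]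
  have sols: "r \<noteq> []" "s \<noteq> []" "morph g r = morph h s" "r' \<noteq> []" "s' \<noteq> []" "morph g r' = morph h s'"
    using minimal_solD[OF min(1)] minimal_solD[OF min(2)] by simp_all
  let ?fg = "\<lambda>l. first_Z Z (g l)" and ?fh = "\<lambda>l. first_Z Z (h l)"
  have "longest_common_prefix r r' = []"
    by (rule longest_common_prefix_Nil_if_solution[OF ne min distinct eq])
  then have "hd r \<noteq> hd r'" using hd_neq_if_longest_common_prefix_Nil sols by blast
  have inj_g: "inj ?fg" using g unfolding Z_marked_def inj_def by blast
  have first_s: "?fh (hd s) = ?fg (hd r)"
    using first_Z_morph[OF hull(1) ne(1) sols(1)] first_Z_morph[OF hull(2) ne(2) sols(2)] sols(3) by simp
  have first_s': "?fh (hd s') = ?fg (hd r')"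
    using first_Z_morph[OF hull(1) ne(1) sols(4)] first_Z_morph[OF hull(2) ne(2) sols(5)] sols(6) by simp
  have "?fh (hd s) \<noteq> ?fh (hd s')"
    unfolding first_s first_s' using injD[OF inj_g] \<open>hd r \<noteq> hd r'\<close> by blast
  moreover have "\<not> inj ?fh" using not_marked hull(2) unfolding Z_marked_def inj_def by blast
  ultimately have "range ?fh \<subseteq> range ?fg"
    using range_subset_if_not_inj[of ?fh "hd s" "hd s'" ?fg] first_s first_s' by simp
  moreover have "FB Z \<subseteq> range ?fg \<union> range ?fh"
    using FB_subset_first_Z_image[OF nonempty] unfolding Z by (simp add: image_Un image_image)
  moreover have "range ?fg \<subseteq> FB Z" using first_Z_in_FB hull(1) ne(1) by blast
  ultimately have "FB Z = range ?fg" by blast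
  moreover have "card (range ?fg) = 3" using card_image[of ?fg UNIV] inj_g card_UNIV_letter by simp
  ultimately show False using card_FB by simp
qed

lemma critical_overflow_minimal_solutions:
  fixes g h :: "letter \<Rightarrow> 'a list"
  assumes Z: "Z = range g \<union> range h" and nonempty: "[] \<notin> Z"
    and g: "Z_marked Z g" and card_FB: "card (FB Z) \<noteq> 3"
    and min: "minimal_sol g h r s" "minimal_sol g h r' s'" and distinct: "(r, s) \<noteq> (r', s')"
  shows "\<exists>ov. morph g (longest_common_prefix r r') = morph h (longest_common_prefix s s') @ ov
    \<and> critical_overflow g h (longest_common_prefix r r') (longest_common_prefix s s') ov
    \<and> (Z_marked Z h \<longleftrightarrow> ov = [])"
proof -
  note hull = in_free_hull_if_range_Un[OF Z] and ne = not_Nil_if_range_Un[OF Z nonempty]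
  have sols: "morph g r = morph h s" "morph g r' = morph h s'" "r \<noteq> []"
    using minimal_solD[OF min(1)] minimal_solD[OF min(2)] by simp_all
  obtain ov where ov: "morph g (longest_common_prefix r r') = morph h (longest_common_prefix s s') @ ov"
    using Z_marked_prefix_longest_common_prefix[OF g ne(1) hull(2) sols(1,2)] by (auto simp: prefix_def)
  moreover have "critical_overflow g h (longest_common_prefix r r') (longest_common_prefix s s') ov"
    using ov critical_extensions_longest_common_prefix[OF inj_morph_if_Z_marked[OF g ne(1)] ne(2)
        sols(1,2) distinct sols(3)]
    unfolding critical_overflow_def by blast
  moreover have "ov = []" if "Z_marked Z h"
    using Z_marked_prefix_longest_common_prefix[OF that ne(2) hull(1) sols(1)[symmetric]
        sols(2)[symmetric]] ov
    by (auto simp: prefix_def)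
  moreover have "Z_marked Z h" if "ov = []"
    using Z_marked_if_no_overflow[OF Z nonempty g card_FB min distinct] ov that by simp
  ultimately show ?thesis by blast
qed

theorem proposition4p5:
  fixes x y z u v w :: "'a::countable list"
    and r s r' s' :: "letter list"
  assumes X3: "card {x, y, z} = 3" and U3: "card {u, v, w} = 3"
    and nonempty: "[] \<notin> {x, y, z, u, v, w}"
    and XU: "{x, y, z} \<noteq> {u, v, w}"
    and Xmax: "k_maximal 3 (monoid_gen {x, y, z})"
    and Umax: "k_maximal 3 (monoid_gen {u, v, w})"
    and gmarked: "Z_marked ({x, y, z} \<union> {u, v, w})
                    (\<lambda>l. case l of La \<Rightarrow> x | Lb \<Rightarrow> y | Lc \<Rightarrow> z)"
    and min1: "minimal_sol (\<lambda>l. case l of La \<Rightarrow> x | Lb \<Rightarrow> y | Lc \<Rightarrow> z)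
                           (\<lambda>l. case l of La \<Rightarrow> u | Lb \<Rightarrow> v | Lc \<Rightarrow> w) r s"
    and min2: "minimal_sol (\<lambda>l. case l of La \<Rightarrow> x | Lb \<Rightarrow> y | Lc \<Rightarrow> z)
                           (\<lambda>l. case l of La \<Rightarrow> u | Lb \<Rightarrow> v | Lc \<Rightarrow> w) r' s'"
    and distinct: "(r, s) \<noteq> (r', s')"
  shows "\<exists>ov. morph (\<lambda>l. case l of La \<Rightarrow> x | Lb \<Rightarrow> y | Lc \<Rightarrow> z)
                   (longest_common_prefix r r')
             = morph (\<lambda>l. case l of La \<Rightarrow> u | Lb \<Rightarrow> v | Lc \<Rightarrow> w)
                   (longest_common_prefix s s') @ ov
          \<and> critical_overflow (\<lambda>l. case l of La \<Rightarrow> x | Lb \<Rightarrow> y | Lc \<Rightarrow> z)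
                (\<lambda>l. case l of La \<Rightarrow> u | Lb \<Rightarrow> v | Lc \<Rightarrow> w)
                (longest_common_prefix r r') (longest_common_prefix s s') ov
          \<and> (Z_marked ({x, y, z} \<union> {u, v, w})
                (\<lambda>l. case l of La \<Rightarrow> u | Lb \<Rightarrow> v | Lc \<Rightarrow> w) \<longleftrightarrow> ov = [])"
proof -
  let ?g = "\<lambda>l. case l of La \<Rightarrow> x | Lb \<Rightarrow> y | Lc \<Rightarrow> z"
  let ?h = "\<lambda>l. case l of La \<Rightarrow> u | Lb \<Rightarrow> v | Lc \<Rightarrow> w"
  have Z: "{x, y, z} \<union> {u, v, w} = range ?g \<union> range ?h"
    by (simp add: UNIV_letter)
  have "[] \<notin> {x, y, z} \<union> {u, v, w}"
    using nonempty by simp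
  moreover have "card (FB ({x, y, z} \<union> {u, v, w})) \<noteq> 3"
    using card_FB_neq_if_k_maximal[OF _ X3 U3 XU Xmax Umax] by simp
  ultimately show ?thesis
    using critical_overflow_minimal_solutions[OF Z _ gmarked _ min1 min2 distinct] by blast
qed

end
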